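(* Let $m\geq 2$ be an integer, $q$ an odd prime power and $n=\frac{q^m+1}{2}$. Then the largest odd coset leader modulo $q^m+1$ is $\delta_1=n$ if $q^m\equiv 1\pmod 4$, and $\delta_1=\frac{(q-1)n}{q+1}$ if $q^m\equiv 3\pmod 4$. Moreover, $|C_{\delta_1}^{(q,q^m+1)}|=1$ if $q^m\equiv 1\pmod 4$ and $|C_{\delta_1}^{(q,q^m+1)}|=2$ if $q^m\equiv 3\pmod 4$.
   Context: $C_i^{(q,N)}=\{i,iq,iq^2,\ldots\}\bmod N$ denotes the $q$-cyclotomic coset of $i$ modulo $N$; its smallest element is its coset leader. An odd coset leader modulo $N$ is a coset leader that is an odd integer. *)

theory Defs
  imports "HOL-Number_Theory.Number_Theory"
begin

definition cyc_coset :: "nat \<Rightarrow> nat \<Rightarrow> nat \<Rightarrow> nat set" where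
  "cyc_coset q N i = {(i * q ^ j) mod N | j. True}"

definition coset_leader :: "nat \<Rightarrow> nat \<Rightarrow> nat \<Rightarrow> bool" where
  "coset_leader q N i \<longleftrightarrow> i < N \<and> i = Min (cyc_coset q N i)"

definition odd_coset_leaders :: "nat \<Rightarrow> nat \<Rightarrow> nat set" where
  "odd_coset_leaders q N = {i. coset_leader q N i \<and> odd i}"

definition prime_power :: "nat \<Rightarrow> bool" where
  "prime_power q \<longleftrightarrow> (\<exists>p k. prime p \<and> k \<ge> 1 \<and> q = p ^ k)"

end

theory Submission
  imports Defs
begin

text \<open>
  Modulo \<open>N = q^m + 1\<close>, multiplication by \<open>q^m\<close> is negation, so every cyclotomic coset is
  closed under \<open>x \<mapsto> N - x\<close>; hence all elements of the coset of a leader \<open>i\<close> lie in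
  \<open>[i, N - i]\<close>, and \<open>i \<le> n = N/2\<close>. Since \<open>q\<close> is odd, \<open>n q \<equiv> n\<close>. If \<open>q^m \<equiv> 1 (mod 4)\<close>
  then \<open>n\<close> is odd and is a coset on its own. If \<open>q^m \<equiv> 3 (mod 4)\<close> then \<open>q \<equiv> 3 (mod 4)\<close>
  and \<open>m\<close> is odd, so \<open>N = (q + 1) M\<close> with \<open>M\<close> odd and \<open>n\<close> even. For a leader
  \<open>i = n - t < n\<close> the element \<open>i q \<equiv> n - t q\<close> must stay within distance \<open>t\<close> of \<open>n\<close>,
  which forces \<open>t (q + 1) \<ge> N\<close>, i.e. \<open>i \<le> n - M = (q - 1) M / 2 = d\<close>. Finally \<open>d q \<equiv> -d\<close>
  because \<open>d (q + 1)\<close> is a multiple of \<open>N\<close>, so the coset of \<open>d\<close> is \<open>{d, N - d}\<close>.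
\<close>

lemma cyc_coset_subset_lessThan: "0 < N \<Longrightarrow> cyc_coset q N i \<subseteq> {..<N}"
  unfolding cyc_coset_def by auto

lemma finite_cyc_coset: "0 < N \<Longrightarrow> finite (cyc_coset q N i)"
  by (rule finite_subset[OF cyc_coset_subset_lessThan]) auto

lemma mod_mult_power_in_cyc_coset: "(i * q ^ j) mod N \<in> cyc_coset q N i"
  unfolding cyc_coset_def by auto

lemma cyc_coset_mult_closed:
  assumes "x \<in> cyc_coset q N i"
  shows "(x * q ^ j) mod N \<in> cyc_coset q N i"
proof -
  obtain k where "x = (i * q ^ k) mod N"
    using assms unfolding cyc_coset_def by blast
  then have "(x * q ^ j) mod N = (i * q ^ (k + j)) mod N"
    by (metis mod_mult_left_eq power_add mult.assoc)
  then show ?thesis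
    by (simp add: mod_mult_power_in_cyc_coset)
qed

lemma self_in_cyc_coset: "i < N \<Longrightarrow> i \<in> cyc_coset q N i"
  using mod_mult_power_in_cyc_coset[of i q 0 N] by simp

lemma coset_leader_le:
  assumes "coset_leader q N i" "x \<in> cyc_coset q N i"
  shows "i \<le> x"
proof -
  have "0 < N" "i = Min (cyc_coset q N i)"
    using assms(1) by (auto simp: coset_leader_def)
  then show ?thesis
    using assms(2) finite_cyc_coset Min_le by metis
qed

lemma cyc_coset_eq_pair:
  assumes "i < N" "(i * q) mod N = k" "(k * q) mod N = i"
  shows "cyc_coset q N i = {i, k}"
proof -
  have "(i * q ^ j) mod N = (if even j then i else k)" for j
  proof (induction j)
    case 0
    then show ?case using assms(1) by simp
  next
    case (Suc j)
    have "(i * q ^ Suc j) mod N = ((i * q ^ j) mod N * q) mod N"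
      by (metis mod_mult_left_eq power_Suc2 mult.assoc)
    then show ?case using Suc assms(2,3) by auto
  qed
  then show ?thesis
    unfolding cyc_coset_def by (auto intro: exI[of _ 0] exI[of _ 1])
qed

lemma finite_odd_coset_leaders: "finite (odd_coset_leaders q N)"
  unfolding odd_coset_leaders_def coset_leader_def
  by (rule finite_subset[of _ "{..<N}"]) auto

lemma Max_odd_coset_leaders_eqI:
  assumes "coset_leader q N d" "odd d"
    and "\<And>i. coset_leader q N i \<Longrightarrow> odd i \<Longrightarrow> i \<le> d"
  shows "Max (odd_coset_leaders q N) = d"
  using assms finite_odd_coset_leaders
  by (intro Max_eqI) (auto simp: odd_coset_leaders_def)

lemma mult_mod_eq_self_if_dvd:
  fixes x N p :: nat
  assumes "x < N" "N dvd x * (p - 1)" "0 < p"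
  shows "(x * p) mod N = x"
proof -
  have "x * p = x + x * (p - 1)"
    using assms(3) by (cases p) auto
  then show ?thesis
    using assms(1,2) by (metis dvd_imp_mod_0 mod_add_right_eq mod_less add_0_right)
qed

lemma mult_mod_eq_neg_if_dvd:
  fixes x N p :: nat
  assumes "0 < x" "x < N" "N dvd x * (p + 1)"
  shows "(x * p) mod N = N - x"
proof -
  obtain k where "x * (p + 1) = N * k"
    using assms(3) by blast
  then have k: "x * p + x = N * k"
    by simp
  with assms(1) have "0 < k" by (cases k) auto
  then have "x * p = (N - x) + (k - 1) * N"
    using k assms(2) by (cases k) (auto simp: algebra_simps)
  then have "(x * p) mod N = (N - x) mod N"
    by (metis mod_mult_self1)
  then show ?thesis
    using assms by simp
qed

lemma coset_leader_add_le:
  assumes "coset_leader q (q ^ m + 1) i" "x \<in> cyc_coset q (q ^ m + 1) i"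
  shows "x + i \<le> q ^ m + 1"
proof (cases "x = 0")
  case False
  have "x < q ^ m + 1"
    using assms(2) cyc_coset_subset_lessThan by fastforce
  then have "(x * q ^ m) mod (q ^ m + 1) = q ^ m + 1 - x"
    using False by (intro mult_mod_eq_neg_if_dvd dvd_triv_right) auto
  then have "i \<le> q ^ m + 1 - x"
    using coset_leader_le[OF assms(1) cyc_coset_mult_closed[OF assms(2)]] by metis
  then show ?thesis
    using \<open>x < q ^ m + 1\<close> by linarith
qed (use coset_leader_le[OF assms] in simp)

lemma coset_leader_le_half:
  assumes "coset_leader q (q ^ m + 1) i"
  shows "2 * i \<le> q ^ m + 1"
proof -
  have "i \<in> cyc_coset q (q ^ m + 1) i"
    using assms by (intro self_in_cyc_coset) (simp add: coset_leader_def)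
  then show ?thesis
    using coset_leader_add_le[OF assms] by fastforce
qed

lemma half_mult_odd_mod_eq:
  fixes q N :: nat
  assumes "odd q" "even N" "0 < N"
  shows "(N div 2 * q) mod N = N div 2"
proof (rule mult_mod_eq_self_if_dvd)
  obtain k r where "N = 2 * k" "q - 1 = 2 * r"
    using assms(1,2) by (metis evenE odd_two_times_div_two_nat)
  then show "N dvd N div 2 * (q - 1)"
    by simp
qed (use assms in \<open>auto simp: odd_pos\<close>)

lemma coset_leader_far_from_half:
  fixes q m i :: nat
  defines "N \<equiv> q ^ m + 1"
  defines "n \<equiv> N div 2"
  assumes "odd q" "coset_leader q N i" "i \<noteq> n"
  shows "N \<le> (n - i) * (q + 1)"
proof (rule ccontr)
  assume "\<not> N \<le> (n - i) * (q + 1)"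
  define t where "t = n - i"
  have small: "t * q + t < N"
    using \<open>\<not> N \<le> (n - i) * (q + 1)\<close> by (simp add: distrib_left flip: t_def)
  have N_eq: "N = 2 * n"
    using assms(3) unfolding N_def n_def by simp
  have "i < n"
    using coset_leader_le_half[of q m i] assms(4,5) N_eq unfolding N_def by auto
  have "q \<noteq> 1"
    using small N_eq \<open>i < n\<close> unfolding N_def t_def by auto
  then have "1 < q"
    using odd_pos[OF assms(3)] by linarith
  then have "t < t * q"
    using \<open>i < n\<close> unfolding t_def by simp
  define x where "x = (i * q) mod N"
  have "x \<in> cyc_coset q N i"
    using cyc_coset_mult_closed[OF self_in_cyc_coset, of i N q 1] \<open>i < n\<close> N_eq
    by (simp add: x_def)
  then have x_bounds: "i \<le> x" "x + i \<le> N"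
    using coset_leader_le coset_leader_add_le assms(4) unfolding N_def by blast+
  have "(x + t * q) mod N = (i * q + t * q) mod N"
    by (simp add: x_def mod_add_left_eq)
  also have "\<dots> = (n * q) mod N"
    using \<open>i < n\<close> by (simp add: t_def add_mult_distrib[symmetric])
  also have "\<dots> = n"
    using half_mult_odd_mod_eq[of q N] assms(3) N_eq unfolding n_def N_def by simp
  finally have "(x + t * q) mod N = n" .
  \<comment> \<open>but \<open>x + t q\<close> lies strictly between \<open>n\<close> and \<open>N + n\<close>, as \<open>t < t q\<close> and \<open>t q + t < N\<close>\<close>
  moreover have "n < x + t * q" "x + t * q < N + n"
    using x_bounds small \<open>t < t * q\<close> N_eq \<open>i < n\<close> unfolding t_def by linarith+
  ultimately show False
    using N_eq by (cases "x + t * q < N") (auto simp: le_mod_geq)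
qed

lemma power_mod_4_odd:
  fixes q m :: nat
  assumes "odd q"
  shows "q ^ m mod 4 = (if q mod 4 = 3 \<and> odd m then 3 else 1)"
proof (induction m)
  case (Suc m)
  have "q ^ Suc m mod 4 = (q mod 4) * (q ^ m mod 4) mod 4"
    by (simp add: mod_mult_eq)
  moreover have "q mod 4 = 1 \<or> q mod 4 = 3"
    using assms by presburger
  ultimately show ?case
    using Suc by auto
qed simp

lemma even_sum_powers_of_odd_iff:
  fixes x :: int
  assumes "odd x"
  shows "even (\<Sum>k\<le>l. x ^ k) \<longleftrightarrow> odd l"
  by (induction l) (use assms in auto)

lemma power_plus_one_odd_cofactor:
  fixes q m :: nat
  assumes "odd q" "odd m"
  obtains M where "q ^ m + 1 = (q + 1) * M" "odd M"
proof -
  obtain l where m: "m = Suc l"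
    using assms(2) by (cases m) auto
  then have "even l"
    using assms(2) by simp
  define S where "S = (\<Sum>k\<le>l. (- int q) ^ k)"
  have S_eq: "(1 + int q) * S = 1 + int q ^ m"
    using sum_gp_basic[of "- int q" l] assms(2) unfolding S_def by (simp add: m)
  then have "0 < (1 + int q) * S"
    by (simp add: add_pos_nonneg)
  then have "0 < S"
    by (simp add: zero_less_mult_iff)
  moreover have "odd S"
    using even_sum_powers_of_odd_iff[of "- int q" l] assms(1) \<open>even l\<close> unfolding S_def by simp
  moreover have "q ^ m + 1 = (q + 1) * nat S"
  proof -
    have "int (q ^ m + 1) = int ((q + 1) * nat S)"
      using S_eq \<open>0 < S\<close> by (simp add: algebra_simps)
    then show ?thesis
      by (simp only: of_nat_eq_iff)
  qed
  ultimately show ?thesis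
    using that[of "nat S"] by (simp add: even_nat_iff)
qed

lemma max_odd_coset_leader_1mod4:
  fixes q m :: nat
  defines "N \<equiv> q ^ m + 1"
  defines "n \<equiv> (q ^ m + 1) div 2"
  assumes "odd q" "q ^ m mod 4 = 1"
  shows "Max (odd_coset_leaders q N) = n" "cyc_coset q N n = {n}"
proof -
  have N_eq: "N = 2 * n"
    using assms(3) unfolding N_def n_def by simp
  have "odd n"
    using assms(4) unfolding n_def by presburger
  have "(n * q) mod N = n"
    using half_mult_odd_mod_eq[of q N] assms(3) unfolding N_def n_def by simp
  then show coset: "cyc_coset q N n = {n}"
    using cyc_coset_eq_pair[of n N q n] N_eq \<open>odd n\<close> by (simp add: odd_pos)
  then have "coset_leader q N n"
    using N_eq \<open>odd n\<close> by (simp add: coset_leader_def odd_pos)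
  then show "Max (odd_coset_leaders q N) = n"
    using \<open>odd n\<close> coset_leader_le_half[of q m] N_eq unfolding N_def
    by (intro Max_odd_coset_leaders_eqI) auto
qed

lemma max_odd_coset_leader_3mod4:
  fixes q m :: nat
  defines "N \<equiv> q ^ m + 1"
  defines "n \<equiv> (q ^ m + 1) div 2"
  defines "d \<equiv> (q - 1) * n div (q + 1)"
  assumes "odd q" "q ^ m mod 4 = 3"
  shows "Max (odd_coset_leaders q N) = d" "cyc_coset q N d = {d, N - d}" "d < N - d"
proof -
  have "q mod 4 = 3" "odd m"
    using power_mod_4_odd[OF assms(4), of m] assms(5) by (auto split: if_splits)
  then obtain M where N_eq: "N = (q + 1) * M" and "odd M"
    using power_plus_one_odd_cofactor assms(4) unfolding N_def by blast
  define a where "a = q div 2"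
  have q_eq: "q = 2 * a + 1" and "odd a"
    using \<open>q mod 4 = 3\<close> unfolding a_def by presburger+
  have n_eq: "n = (a + 1) * M"
    using N_eq q_eq unfolding n_def N_def[symmetric] by simp
  have "(q - 1) * n = (q + 1) * (a * M)"
    using q_eq n_eq by (simp add: algebra_simps)
  then have d_eq: "d = a * M"
    unfolding d_def by (metis nonzero_mult_div_cancel_left add_gr_0 zero_less_one less_not_refl2)
  have "0 < M" "0 < a"
    using \<open>odd M\<close> \<open>odd a\<close> by (auto simp: odd_pos)
  then have "0 < d" and d_less: "d < N - d"
    using N_eq q_eq d_eq by auto
  have "d * (q + 1) = a * N"
    unfolding N_eq d_eq by (simp add: algebra_simps)
  then have d_dvd: "N dvd d * (q + 1)"
    by simp
  then have "N dvd (N - d) * (q + 1)"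
    unfolding diff_mult_distrib by (intro dvd_diff_nat) simp_all
  then have "((N - d) * q) mod N = N - (N - d)"
    using \<open>0 < d\<close> d_less by (intro mult_mod_eq_neg_if_dvd) auto
  moreover have "(d * q) mod N = N - d"
    using d_dvd \<open>0 < d\<close> d_less by (intro mult_mod_eq_neg_if_dvd) auto
  ultimately show coset: "cyc_coset q N d = {d, N - d}"
    using d_less by (intro cyc_coset_eq_pair) auto
  show "d < N - d"
    by (fact d_less)
  have "coset_leader q N d"
    using coset d_less by (simp add: coset_leader_def)
  moreover have "i \<le> d" if "coset_leader q N i" "odd i" for i
  proof -
    have "i \<noteq> n"
      using n_eq \<open>odd a\<close> \<open>odd i\<close> by auto
    then have "N \<le> (n - i) * (q + 1)"
      using coset_leader_far_from_half[of q m i] that(1) assms(4) unfolding N_def n_def by blast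
    then have "M \<le> n - i"
      unfolding N_eq by (metis mult.commute mult_le_cancel1 zero_less_Suc Suc_eq_plus1)
    then show ?thesis
      using n_eq d_eq \<open>0 < M\<close> by (simp add: algebra_simps)
  qed
  ultimately show "Max (odd_coset_leaders q N) = d"
    using \<open>odd M\<close> \<open>odd a\<close> d_eq by (intro Max_odd_coset_leaders_eqI) auto
qed

theorem lemma26:
  fixes q m n :: nat
  assumes "m \<ge> 2" and "prime_power q" and "odd q"
    and "n = (q ^ m + 1) div 2"
  shows "(q ^ m mod 4 = 1 \<longrightarrow>
            Max (odd_coset_leaders q (q ^ m + 1)) = n \<and>
            card (cyc_coset q (q ^ m + 1) (Max (odd_coset_leaders q (q ^ m + 1)))) = 1)
       \<and> (q ^ m mod 4 = 3 \<longrightarrow>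
            Max (odd_coset_leaders q (q ^ m + 1)) = (q - 1) * n div (q + 1) \<and>
            card (cyc_coset q (q ^ m + 1) (Max (odd_coset_leaders q (q ^ m + 1)))) = 2)"
proof (intro conjI impI)
  assume "q ^ m mod 4 = 1"
  from max_odd_coset_leader_1mod4[OF assms(3) this]
  show "Max (odd_coset_leaders q (q ^ m + 1)) = n"
    "card (cyc_coset q (q ^ m + 1) (Max (odd_coset_leaders q (q ^ m + 1)))) = 1"
    using assms(4) by simp_all
next
  assume "q ^ m mod 4 = 3"
  from max_odd_coset_leader_3mod4[OF assms(3) this]
  show "Max (odd_coset_leaders q (q ^ m + 1)) = (q - 1) * n div (q + 1)"
    "card (cyc_coset q (q ^ m + 1) (Max (odd_coset_leaders q (q ^ m + 1)))) = 2"
    using assms(4) by simp_all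
qed

end
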